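(* Let $\ell$ be even and let $G$ be an $(n,\ell)$-extremal graph of even order $n$ such that the maximum degree of $\overline{G}$ is at most $2$. Then each connected component of $\overline{G}$ is isomorphic to either $P_2$ or $P_4$.
   Context: All graphs are finite and simple; $\overline{G}$ is the complement of $G$; $P_k$ is the path on $k$ vertices. Vertex labels lie in $\mathbb{Z}_\ell$ ($\ell\ge2$). In the neighborhood Lights Out game on $G$, toggling a vertex $v$ adds $1$ (mod $\ell$) to the label of each vertex of the closed neighborhood $N[v]$; the game is won when all labels are $0$. $G$ is $N$-AW if the game can be won from every initial labeling. $\max(n,\ell)$ is the maximum number of edges of an $N$-AW graph on $n$ vertices, and an $(n,\ell)$-extremal graph is an $N$-AW graph on $n$ vertices with $\max(n,\ell)$ edges. *)

theory Defs
  imports Main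
begin

definition simple_graph :: "'a set \<Rightarrow> ('a \<Rightarrow> 'a \<Rightarrow> bool) \<Rightarrow> bool" where
  "simple_graph V E \<longleftrightarrow> finite V \<and>
     (\<forall>u v. E u v \<longrightarrow> u \<in> V \<and> v \<in> V) \<and>
     (\<forall>u v. E u v \<longrightarrow> E v u) \<and> (\<forall>v. \<not> E v v)"

definition num_edges :: "'a set \<Rightarrow> ('a \<Rightarrow> 'a \<Rightarrow> bool) \<Rightarrow> nat" where
  "num_edges V E = card {{u, v} | u v. u \<in> V \<and> v \<in> V \<and> E u v}"

definition compl_graph :: "'a set \<Rightarrow> ('a \<Rightarrow> 'a \<Rightarrow> bool) \<Rightarrow> 'a \<Rightarrow> 'a \<Rightarrow> bool" where
  "compl_graph V E u v \<longleftrightarrow> u \<in> V \<and> v \<in> V \<and> u \<noteq> v \<and> \<not> E u v"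

definition degree :: "'a set \<Rightarrow> ('a \<Rightarrow> 'a \<Rightarrow> bool) \<Rightarrow> 'a \<Rightarrow> nat" where
  "degree V E v = card {u \<in> V. E v u}"

text \<open>Neighborhood Lights Out over Z_l: toggling v (t v times) adds t v to every label
  in the closed neighborhood N[v].\<close>
definition N_AW :: "'a set \<Rightarrow> ('a \<Rightarrow> 'a \<Rightarrow> bool) \<Rightarrow> nat \<Rightarrow> bool" where
  "N_AW V E l \<longleftrightarrow> (\<forall>f :: 'a \<Rightarrow> int. \<exists>t :: 'a \<Rightarrow> nat. \<forall>u \<in> V.
      (f u + (\<Sum>v \<in> {v \<in> V. v = u \<or> E u v}. int (t v))) mod int l = 0)"

text \<open>max(n,l): maximum number of edges of an N-AW graph on n vertices
  (vertex set {0..<n} without loss of generality).\<close>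
definition max_NAW :: "nat \<Rightarrow> nat \<Rightarrow> nat" where
  "max_NAW n l = Max {num_edges {0..<n} E | E. simple_graph {0..<n} E \<and> N_AW {0..<n} E l}"

definition extremal :: "nat \<Rightarrow> nat \<Rightarrow> 'a set \<Rightarrow> ('a \<Rightarrow> 'a \<Rightarrow> bool) \<Rightarrow> bool" where
  "extremal n l V E \<longleftrightarrow> simple_graph V E \<and> card V = n \<and> N_AW V E l \<and>
     num_edges V E = max_NAW n l"

definition component :: "'a set \<Rightarrow> ('a \<Rightarrow> 'a \<Rightarrow> bool) \<Rightarrow> 'a \<Rightarrow> 'a set" where
  "component V E v = {u \<in> V. E\<^sup>*\<^sup>* v u}"

definition iso_path :: "('a \<Rightarrow> 'a \<Rightarrow> bool) \<Rightarrow> 'a set \<Rightarrow> nat \<Rightarrow> bool" where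
  "iso_path E C k \<longleftrightarrow> (\<exists>f. bij_betw f {0..<k} C \<and>
     (\<forall>i<k. \<forall>j<k. E (f i) (f j) \<longleftrightarrow> (i + 1 = j \<or> j + 1 = i)))"

end

theory Submission
  imports Defs "HOL-Library.FuncSet"
begin

(* The game on G is winnable from every labelling iff the closed-neighbourhood matrix N of G
   is invertible over Z_l, i.e. iff N x = 0 (mod l) only for x = 0 (mod l). For even l the
   vector (l/2) 1_T is such a null vector as soon as T is nonempty and meets every closed
   neighbourhood of G in an even number of vertices.

   Let H be the complement, of maximum degree 2. A path of H starting at a leaf p1 either stops
   after 2 or 4 vertices (a P2 or P4 component), or stops after 3 vertices, and then T = {p1, p3}
   is as above, or runs through 5 vertices p1 ... p5; in the last case adding the edge p4 p5 to G
   keeps it N-AW, contradicting extremality. So the union U of the components of H that are not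
   P2 or P4 contains only vertices of even H-degree; it has even size because n is even, so
   T = U is as above and U must be empty. *)

definition closed_nbhd :: "'a set \<Rightarrow> ('a \<Rightarrow> 'a \<Rightarrow> bool) \<Rightarrow> 'a \<Rightarrow> 'a set" where
  "closed_nbhd V E w = {v \<in> V. v = w \<or> E w v}"

definition closed_nbhd_null :: "'a set \<Rightarrow> ('a \<Rightarrow> 'a \<Rightarrow> bool) \<Rightarrow> nat \<Rightarrow> ('a \<Rightarrow> int) \<Rightarrow> bool" where
  "closed_nbhd_null V E l x \<longleftrightarrow> (\<forall>w\<in>V. int l dvd (\<Sum>v\<in>closed_nbhd V E w. x v))"

lemma closed_nbhd_sym:
  "simple_graph V E \<Longrightarrow> u \<in> V \<Longrightarrow> v \<in> V \<Longrightarrow> v \<in> closed_nbhd V E u \<longleftrightarrow> u \<in> closed_nbhd V E v"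
  unfolding closed_nbhd_def simple_graph_def by auto

lemma sum_closed_nbhd_swap:
  fixes x y :: "'a \<Rightarrow> 'b :: comm_semiring_0"
  assumes sg: "simple_graph V E"
  shows "(\<Sum>u\<in>V. x u * (\<Sum>v\<in>closed_nbhd V E u. y v)) = (\<Sum>v\<in>V. y v * (\<Sum>u\<in>closed_nbhd V E v. x u))"
proof -
  have fin: "finite V" using sg by (simp add: simple_graph_def)
  have "(\<Sum>u\<in>V. x u * (\<Sum>v\<in>closed_nbhd V E u. y v))
      = (\<Sum>u\<in>V. \<Sum>v\<in>V. if v \<in> closed_nbhd V E u then x u * y v else 0)"
    using fin by (auto simp: sum_distrib_left sum.inter_filter closed_nbhd_def intro!: sum.cong)
  also have "\<dots> = (\<Sum>v\<in>V. \<Sum>u\<in>V. if v \<in> closed_nbhd V E u then x u * y v else 0)"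
    by (rule sum.swap)
  also have "\<dots> = (\<Sum>v\<in>V. \<Sum>u\<in>V. if u \<in> closed_nbhd V E v then y v * x u else 0)"
    using closed_nbhd_sym[OF sg] by (intro sum.cong refl) (auto simp: mult.commute)
  also have "\<dots> = (\<Sum>v\<in>V. y v * (\<Sum>u\<in>closed_nbhd V E v. x u))"
    using fin by (auto simp: sum_distrib_left sum.inter_filter closed_nbhd_def intro!: sum.cong)
  finally show ?thesis .
qed

text \<open>Pairing the winning toggles for the labelling concentrated at u with a null vector x,
  the symmetry of the closed-neighbourhood matrix leaves only x u.\<close>
lemma null_trivial_if_N_AW:
  assumes sg: "simple_graph V E" and naw: "N_AW V E l"
    and null: "closed_nbhd_null V E l x" and u: "u \<in> V"
  shows "int l dvd x u"
proof -
  have fin: "finite V" using sg by (simp add: simple_graph_def)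
  define e where "e = (\<lambda>w. of_bool (w = u) :: int)"
  obtain t :: "'a \<Rightarrow> nat" where t: "\<forall>w\<in>V. (e w + (\<Sum>v\<in>closed_nbhd V E w. int (t v))) mod int l = 0"
    using naw unfolding N_AW_def closed_nbhd_def by blast
  have "int l dvd (\<Sum>w\<in>V. x w * (e w + (\<Sum>v\<in>closed_nbhd V E w. int (t v))))"
    using t by (intro dvd_sum dvd_mult) (simp add: dvd_eq_mod_eq_0)
  also have "(\<Sum>w\<in>V. x w * (e w + (\<Sum>v\<in>closed_nbhd V E w. int (t v))))
      = x u + (\<Sum>v\<in>V. int (t v) * (\<Sum>w\<in>closed_nbhd V E v. x w))"
    using fin u by (simp add: distrib_left sum.distrib e_def sum_closed_nbhd_swap[OF sg])
  finally show ?thesis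
    using null by (simp add: closed_nbhd_null_def dvd_sum dvd_add_left_iff)
qed

lemma inj_on_closed_nbhd_sums_mod:
  assumes triv: "\<And>x. closed_nbhd_null V E l x \<Longrightarrow> \<forall>u\<in>V. int l dvd x u"
  shows "inj_on (\<lambda>t. \<lambda>u\<in>V. (\<Sum>v\<in>closed_nbhd V E u. t v) mod int l) (\<Pi>\<^sub>E u\<in>V. {0..<int l})"
proof (rule inj_onI)
  fix t s assume t: "t \<in> (\<Pi>\<^sub>E u\<in>V. {0..<int l})" and s: "s \<in> (\<Pi>\<^sub>E u\<in>V. {0..<int l})"
    and eq: "(\<lambda>u\<in>V. (\<Sum>v\<in>closed_nbhd V E u. t v) mod int l) = (\<lambda>u\<in>V. (\<Sum>v\<in>closed_nbhd V E u. s v) mod int l)"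
  have null: "closed_nbhd_null V E l (\<lambda>v. t v - s v)"
    unfolding closed_nbhd_null_def
  proof
    fix w assume "w \<in> V"
    then have "(\<Sum>v\<in>closed_nbhd V E w. t v) mod int l = (\<Sum>v\<in>closed_nbhd V E w. s v) mod int l"
      using fun_cong[OF eq, of w] by simp
    then show "int l dvd (\<Sum>v\<in>closed_nbhd V E w. t v - s v)"
      by (simp add: sum_subtractf mod_eq_dvd_iff)
  qed
  show "t = s"
  proof (rule PiE_ext[OF t s])
    fix u assume u: "u \<in> V"
    then have "t u mod int l = s u mod int l"
      using triv[OF null] by (simp add: mod_eq_dvd_iff)
    moreover have "t u \<in> {0..<int l}" "s u \<in> {0..<int l}"
      using t s u by (auto simp: PiE_iff)
    ultimately show "t u = s u"
      by simp
  qed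
qed

lemma N_AW_if_null_trivial:
  assumes fin: "finite V" and l: "0 < l"
    and triv: "\<And>x. closed_nbhd_null V E l x \<Longrightarrow> \<forall>u\<in>V. int l dvd x u"
  shows "N_AW V E l"
  unfolding N_AW_def
proof
  fix f :: "'a \<Rightarrow> int"
  define A where "A = (\<Pi>\<^sub>E u\<in>V. {0..<int l})"
  define move where "move t = (\<lambda>u\<in>V. (\<Sum>v\<in>closed_nbhd V E u. t v) mod int l)" for t
  have "inj_on move A"
    unfolding move_def A_def using triv by (rule inj_on_closed_nbhd_sums_mod)
  then have "move ` A = A"
    using fin l by (intro endo_inj_surj) (auto simp: A_def move_def intro: finite_PiE)
  moreover have "(\<lambda>u\<in>V. (- f u) mod int l) \<in> A"
    using l by (simp add: A_def)
  ultimately obtain t where t: "t \<in> A" and tf: "move t = (\<lambda>u\<in>V. (- f u) mod int l)"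
    by (metis imageE)
  show "\<exists>t'::'a \<Rightarrow> nat. \<forall>u\<in>V. (f u + (\<Sum>v\<in>{v \<in> V. v = u \<or> E u v}. int (t' v))) mod int l = 0"
  proof (intro exI ballI)
    fix u assume u: "u \<in> V"
    have "(\<Sum>v\<in>{v \<in> V. v = u \<or> E u v}. int (nat (t v))) = (\<Sum>v\<in>closed_nbhd V E u. t v)"
      using t by (intro sum.cong) (auto simp: closed_nbhd_def A_def PiE_iff)
    moreover have "(\<Sum>v\<in>closed_nbhd V E u. t v) mod int l = (- f u) mod int l"
      using fun_cong[OF tf, of u] u by (simp add: move_def)
    then have "(f u + (\<Sum>v\<in>closed_nbhd V E u. t v)) mod int l = (f u + - f u) mod int l"
      by (rule mod_add_cong[OF refl])
    ultimately show "(f u + (\<Sum>v\<in>{v \<in> V. v = u \<or> E u v}. int (nat (t v)))) mod int l = 0"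
      by simp
  qed
qed

lemma not_N_AW_if_even_closed_nbhd_meets:
  assumes sg: "simple_graph V E" and l: "even l" "0 < l" and T: "T \<subseteq> V" "T \<noteq> {}"
    and even: "\<forall>w\<in>V. even (card (closed_nbhd V E w \<inter> T))"
  shows "\<not> N_AW V E l"
proof
  assume naw: "N_AW V E l"
  define x where "x v = of_bool (v \<in> T) * int (l div 2)" for v
  have fin: "finite V" using sg by (simp add: simple_graph_def)
  have "closed_nbhd_null V E l x"
    unfolding closed_nbhd_null_def
  proof
    fix w assume "w \<in> V"
    then obtain m where m: "card (closed_nbhd V E w \<inter> T) = 2 * m"
      using even by blast
    have "finite (closed_nbhd V E w)"
      using fin by (simp add: closed_nbhd_def)
    then have "(\<Sum>v\<in>closed_nbhd V E w. x v) = int (2 * m) * int (l div 2)"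
      by (simp add: x_def sum_distrib_right[symmetric] m)
    also have "\<dots> = int l * int m"
      using l(1) by (auto elim!: evenE)
    finally show "int l dvd (\<Sum>v\<in>closed_nbhd V E w. x v)"
      by simp
  qed
  moreover obtain u where u: "u \<in> T"
    using T(2) by blast
  ultimately have "int l dvd int (l div 2)"
    using null_trivial_if_N_AW[OF sg naw] T(1) by (force simp: x_def)
  moreover have "0 < l div 2" "l div 2 < l"
    using l by auto
  ultimately show False
    by (metis nat_dvd_not_less of_nat_dvd_iff)
qed

definition nbhd :: "'a set \<Rightarrow> ('a \<Rightarrow> 'a \<Rightarrow> bool) \<Rightarrow> 'a \<Rightarrow> 'a set" where
  "nbhd V E w = {v \<in> V. E w v}"

lemma nbhd_subset: "nbhd V H w \<subseteq> V"
  by (auto simp: nbhd_def)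

lemma finite_nbhd: "simple_graph V H \<Longrightarrow> finite (nbhd V H w)"
  by (auto simp: simple_graph_def nbhd_def)

lemma adj_iff_in_nbhd: "simple_graph V H \<Longrightarrow> H u w \<longleftrightarrow> w \<in> nbhd V H u"
  by (auto simp: simple_graph_def nbhd_def)

lemma nbhd_sym: "simple_graph V H \<Longrightarrow> u \<in> nbhd V H w \<longleftrightarrow> w \<in> nbhd V H u"
  by (auto simp: simple_graph_def nbhd_def)

lemma not_in_own_nbhd: "simple_graph V H \<Longrightarrow> w \<notin> nbhd V H w"
  by (auto simp: simple_graph_def nbhd_def)

lemma degree_eq_card_nbhd: "degree V H w = card (nbhd V H w)"
  by (simp add: degree_def nbhd_def)

lemma simple_graph_compl_graph: "simple_graph V E \<Longrightarrow> simple_graph V (compl_graph V E)"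
  by (auto simp: simple_graph_def compl_graph_def)

lemma closed_nbhd_eq_Diff_compl:
  "simple_graph V E \<Longrightarrow> w \<in> V \<Longrightarrow> closed_nbhd V E w = V - nbhd V (compl_graph V E) w"
  by (auto simp: simple_graph_def closed_nbhd_def nbhd_def compl_graph_def)

lemma sum_closed_nbhd_eq_Diff_compl:
  fixes y :: "'a \<Rightarrow> 'b :: ab_group_add"
  assumes sg: "simple_graph V E" and w: "w \<in> V"
  shows "(\<Sum>v\<in>closed_nbhd V E w. y v) = (\<Sum>v\<in>V. y v) - (\<Sum>v\<in>nbhd V (compl_graph V E) w. y v)"
proof -
  have "finite V"
    using sg by (simp add: simple_graph_def)
  then show ?thesis
    by (simp add: closed_nbhd_eq_Diff_compl[OF sg w] sum_diff nbhd_subset)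
qed

definition even_meeting :: "'a set \<Rightarrow> ('a \<Rightarrow> 'a \<Rightarrow> bool) \<Rightarrow> 'a set \<Rightarrow> bool" where
  "even_meeting V H T \<longleftrightarrow> (\<forall>w\<in>V. even (card (nbhd V H w \<inter> T)))"

lemma not_N_AW_if_even_meeting_compl:
  assumes sg: "simple_graph V E" and l: "even l" "0 < l" and T: "T \<subseteq> V" "T \<noteq> {}"
    and "even (card T)" and meet: "even_meeting V (compl_graph V E) T"
  shows "\<not> N_AW V E l"
proof (rule not_N_AW_if_even_closed_nbhd_meets[OF sg l T], intro ballI)
  fix w assume w: "w \<in> V"
  let ?M = "nbhd V (compl_graph V E) w \<inter> T"
  have fin: "finite T"
    using T(1) sg by (auto simp: simple_graph_def intro: finite_subset)
  have "closed_nbhd V E w \<inter> T = T - ?M"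
    using closed_nbhd_eq_Diff_compl[OF sg w] T(1) by blast
  then have "card (closed_nbhd V E w \<inter> T) = card T - card ?M"
    using fin by (simp add: card_Diff_subset)
  moreover have "card ?M \<le> card T" and "even (card ?M)"
    using fin w meet by (auto simp: even_meeting_def intro: card_mono)
  ultimately show "even (card (closed_nbhd V E w \<inter> T))"
    using \<open>even (card T)\<close> by auto
qed

lemma component_subset: "component V H v \<subseteq> V"
  by (auto simp: component_def)

lemma self_in_component: "v \<in> V \<Longrightarrow> v \<in> component V H v"
  by (simp add: component_def)

lemma nbhd_subset_component: "u \<in> component V H v \<Longrightarrow> nbhd V H u \<subseteq> component V H v"
  by (auto simp: component_def nbhd_def intro: rtranclp.rtrancl_into_rtrancl)

lemma component_subset_if_closed:
  assumes sg: "simple_graph V H" and v: "v \<in> X" and closed: "\<forall>u\<in>X. nbhd V H u \<subseteq> X"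
  shows "component V H v \<subseteq> X"
proof
  fix w assume "w \<in> component V H v"
  then have "H\<^sup>*\<^sup>* v w"
    by (simp add: component_def)
  then show "w \<in> X"
  proof (induction rule: rtranclp_induct)
    case base
    then show ?case using v .
  next
    case (step y z)
    then show ?case
      using closed adj_iff_in_nbhd[OF sg, of y z] by blast
  qed
qed

lemma component_eq:
  assumes sg: "simple_graph V H" and u: "u \<in> component V H v"
  shows "component V H u = component V H v"
proof -
  have "symp H"
    using sg by (auto simp: simple_graph_def intro: sympI)
  moreover have vu: "H\<^sup>*\<^sup>* v u"
    using u by (simp add: component_def)
  ultimately have "H\<^sup>*\<^sup>* u v"
    by (rule sympD[OF symp_rtranclp])
  with vu show ?thesis
    by (auto simp: component_def intro: rtranclp_trans)
qed

lemma even_card_if_components_even: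
  assumes sg: "simple_graph V H" and X: "X \<subseteq> V"
    and closed: "\<forall>v\<in>X. component V H v \<subseteq> X"
    and even: "\<forall>v\<in>X. even (card (component V H v))"
  shows "even (card X)"
proof -
  have "X \<subseteq> \<Union> (component V H ` X)"
  proof
    fix x assume x: "x \<in> X"
    then have "x \<in> component V H x"
      using X by (simp add: self_in_component subset_iff)
    then show "x \<in> \<Union> (component V H ` X)"
      by (rule UN_I[OF x])
  qed
  then have X_eq: "X = \<Union> (component V H ` X)"
    using closed by blast
  have disjoint: "component V H a \<inter> component V H b = {}"
    if "component V H a \<noteq> component V H b" for a b
    using that component_eq[OF sg] by blast
  have "finite X"
    using X sg by (auto simp: simple_graph_def intro: finite_subset)
  then have "2 dvd card (\<Union> (component V H ` X))"
    using even disjoint by (intro dvd_partition) (auto simp flip: X_eq)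
  then show ?thesis
    using X_eq by simp
qed

lemma even_meeting_if_closed_even_degree:
  assumes sg: "simple_graph V H" and closed: "\<forall>u\<in>U. nbhd V H u \<subseteq> U"
    and even: "\<forall>u\<in>U. even (degree V H u)"
  shows "even_meeting V H U"
  unfolding even_meeting_def
proof
  fix w assume "w \<in> V"
  show "even (card (nbhd V H w \<inter> U))"
  proof (cases "w \<in> U")
    case True
    then show ?thesis
      using closed even by (simp add: Int_absorb2 degree_eq_card_nbhd)
  next
    case False
    then have "nbhd V H w \<inter> U = {}"
      using closed nbhd_sym[OF sg] by blast
    then show ?thesis
      by simp
  qed
qed

lemma iso_path_card: "iso_path H C k \<Longrightarrow> card C = k"
  unfolding iso_path_def by (metis bij_betw_same_card card_atLeastLessThan diff_zero)

lemma iso_path_of_list: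
  assumes "distinct ps"
    and "\<And>i j. i < length ps \<Longrightarrow> j < length ps \<Longrightarrow> H (ps ! i) (ps ! j) \<longleftrightarrow> i + 1 = j \<or> j + 1 = i"
  shows "iso_path H (set ps) (length ps)"
  unfolding iso_path_def using assms by (intro exI[of _ "nth ps"] conjI bij_betw_nth) auto

lemma component_eq_if_closed:
  assumes sg: "simple_graph V H" and X: "X \<subseteq> component V H v" "v \<in> X"
    and closed: "\<forall>u\<in>X. nbhd V H u \<subseteq> X"
  shows "component V H v = X"
  using component_subset_if_closed[OF sg X(2) closed] X(1) by blast

lemma iso_path_component_P2:
  assumes sg: "simple_graph V H" and p: "nbhd V H p1 = {p2}" "nbhd V H p2 = {p1}"
  shows "iso_path H (component V H p1) 2"
proof -
  have c1: "p1 \<in> component V H p1"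
    using p(2) nbhd_subset[of V H p2] by (simp add: self_in_component)
  then have "p2 \<in> component V H p1"
    using nbhd_subset_component[OF c1] p(1) by simp
  with c1 have "component V H p1 = set [p1, p2]"
    using p by (intro component_eq_if_closed[OF sg]) auto
  moreover have "iso_path H (set [p1, p2]) (length [p1, p2])"
    using p not_in_own_nbhd[OF sg, of p1]
    by (intro iso_path_of_list) (auto simp: less_Suc_eq adj_iff_in_nbhd[OF sg])
  ultimately show ?thesis
    by (simp add: numeral_eq_Suc)
qed

lemma iso_path_component_P4:
  assumes sg: "simple_graph V H" and dist: "distinct [p1, p2, p3, p4]"
    and p: "nbhd V H p1 = {p2}" "nbhd V H p2 = {p1, p3}" "nbhd V H p3 = {p2, p4}" "nbhd V H p4 = {p3}"
  shows "iso_path H (component V H p1) 4"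
proof -
  have c1: "p1 \<in> component V H p1"
    using p(2) nbhd_subset[of V H p2] by (simp add: self_in_component)
  then have c2: "p2 \<in> component V H p1"
    using nbhd_subset_component[OF c1] p(1) by simp
  then have c3: "p3 \<in> component V H p1"
    using nbhd_subset_component[OF c2] p(2) by simp
  then have "p4 \<in> component V H p1"
    using nbhd_subset_component[OF c3] p(3) by simp
  with c1 c2 c3 have "component V H p1 = set [p1, p2, p3, p4]"
    using p by (intro component_eq_if_closed[OF sg]) auto
  moreover have "iso_path H (set [p1, p2, p3, p4]) (length [p1, p2, p3, p4])"
    using p dist
    by (intro iso_path_of_list) (auto simp: less_Suc_eq numeral_eq_Suc adj_iff_in_nbhd[OF sg])
  ultimately show ?thesis
    by (simp add: numeral_eq_Suc)
qed

lemma nbhd_cases_max_degree_2: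
  assumes sg: "simple_graph V H" and deg: "\<forall>w\<in>V. degree V H w \<le> 2" and a: "a \<in> nbhd V H w"
  obtains "nbhd V H w = {a}" | b where "b \<noteq> a" "nbhd V H w = {a, b}"
proof -
  have "w \<in> nbhd V H a"
    using a by (simp add: nbhd_sym[OF sg, of w a])
  then have "w \<in> V"
    using nbhd_subset by (rule subsetD[rotated])
  then have "degree V H w \<le> 2"
    using deg by blast
  moreover have "card (nbhd V H w) \<noteq> 0"
    using a finite_nbhd[OF sg] by auto
  ultimately consider "card (nbhd V H w) = 1" | "card (nbhd V H w) = 2"
    by (force simp: degree_eq_card_nbhd)
  then show ?thesis
  proof cases
    case 1
    then show ?thesis
      using a that(1) by (auto simp: card_1_singleton_iff)
  next
    case 2
    then obtain x y where "nbhd V H w = {x, y}" "x \<noteq> y"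
      by (auto simp: card_2_iff)
    then show ?thesis
      using a that(2)[of x] that(2)[of y] by (auto simp: insert_commute)
  qed
qed

definition pendant_path5 :: "'a set \<Rightarrow> ('a \<Rightarrow> 'a \<Rightarrow> bool) \<Rightarrow> 'a \<Rightarrow> 'a \<Rightarrow> 'a \<Rightarrow> 'a \<Rightarrow> 'a \<Rightarrow> bool" where
  "pendant_path5 V H p1 p2 p3 p4 p5 \<longleftrightarrow> distinct [p1, p2, p3, p4, p5] \<and>
     nbhd V H p1 = {p2} \<and> nbhd V H p2 = {p1, p3} \<and> nbhd V H p3 = {p2, p4} \<and> nbhd V H p4 = {p3, p5}"

lemma pendant_path5_distinct: "pendant_path5 V H p1 p2 p3 p4 p5 \<Longrightarrow> distinct [p1, p2, p3, p4, p5]"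
  by (simp add: pendant_path5_def)

lemma even_meeting_ends_of_P3:
  assumes sg: "simple_graph V H"
    and p: "nbhd V H p1 = {p2}" "nbhd V H p3 = {p2}" and "p1 \<noteq> p3"
  shows "even_meeting V H {p1, p3}"
  unfolding even_meeting_def
proof
  fix w assume "w \<in> V"
  have "p1 \<in> nbhd V H w \<longleftrightarrow> w \<in> nbhd V H p1" "p3 \<in> nbhd V H w \<longleftrightarrow> w \<in> nbhd V H p3"
    by (simp_all add: nbhd_sym[OF sg])
  then have "p1 \<in> nbhd V H w \<longleftrightarrow> w = p2" "p3 \<in> nbhd V H w \<longleftrightarrow> w = p2"
    using p by simp_all
  then have "nbhd V H w \<inter> {p1, p3} = (if w = p2 then {p1, p3} else {})"
    by auto
  then show "even (card (nbhd V H w \<inter> {p1, p3}))"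
    using \<open>p1 \<noteq> p3\<close> by simp
qed

lemma pendant_path4_cases:
  assumes sg: "simple_graph V H" and deg: "\<forall>w\<in>V. degree V H w \<le> 2"
    and p: "nbhd V H p1 = {p2}" "nbhd V H p2 = {p1, p3}" "nbhd V H p3 = {p2, p4}"
    and ne': "p3 \<noteq> p1" "p4 \<noteq> p2"
  obtains "iso_path H (component V H p1) 4" | p5 where "pendant_path5 V H p1 p2 p3 p4 p5"
proof -
  have adj: "p2 \<in> nbhd V H p1" "p3 \<in> nbhd V H p2" "p4 \<in> nbhd V H p3"
    using p by simp_all
  then have ne: "p2 \<noteq> p1" "p3 \<noteq> p2" "p4 \<noteq> p3"
    using not_in_own_nbhd[OF sg, of p1] not_in_own_nbhd[OF sg, of p2] not_in_own_nbhd[OF sg, of p3]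
    by auto
  have p43: "p3 \<in> nbhd V H p4"
    using adj(3) by (simp add: nbhd_sym[OF sg, of p3 p4])
  then have "p4 \<noteq> p1"
    using p(1) ne(2) by auto
  then have dist4: "distinct [p1, p2, p3, p4]"
    using ne ne' by auto
  from p43 consider (P4) "nbhd V H p4 = {p3}" | (longer) p5 where "p5 \<noteq> p3" "nbhd V H p4 = {p3, p5}"
    by (rule nbhd_cases_max_degree_2[OF sg deg])
  then show ?thesis
  proof cases
    case P4
    then show ?thesis
      using iso_path_component_P4[OF sg dist4 p] that(1) by blast
  next
    case (longer p5)
    then have "p4 \<in> nbhd V H p5"
      by (simp add: nbhd_sym[OF sg, of p4 p5])
    then have "p5 \<noteq> p1" "p5 \<noteq> p2" "p5 \<noteq> p4"
      using p(1,2) \<open>p4 \<noteq> p1\<close> ne(3) ne'(2) not_in_own_nbhd[OF sg, of p4] by auto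
    then have "distinct [p1, p2, p3, p4, p5]"
      using dist4 longer(1) by auto
    then show ?thesis
      using p longer(2) that(2) by (auto simp: pendant_path5_def)
  qed
qed

lemma pendant_vertex_component_cases:
  assumes sg: "simple_graph V H" and deg: "\<forall>w\<in>V. degree V H w \<le> 2" and p1: "nbhd V H p1 = {p2}"
  obtains "iso_path H (component V H p1) 2" | "iso_path H (component V H p1) 4"
    | T where "T \<subseteq> V" "card T = 2" "even_meeting V H T"
    | p3 p4 p5 where "pendant_path5 V H p1 p2 p3 p4 p5"
proof -
  have "p1 \<in> nbhd V H p2"
    using p1 by (simp add: nbhd_sym[OF sg, of p1 p2])
  then consider (P2) "nbhd V H p2 = {p1}" | (long) p3 where "p3 \<noteq> p1" "nbhd V H p2 = {p1, p3}"
    by (rule nbhd_cases_max_degree_2[OF sg deg])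
  then show ?thesis
  proof cases
    case P2
    then show ?thesis
      using iso_path_component_P2[OF sg p1] that(1) by blast
  next
    case (long p3)
    then have "p2 \<in> nbhd V H p3"
      by (simp add: nbhd_sym[OF sg, of p2 p3])
    then consider (P3) "nbhd V H p3 = {p2}" | (longer) p4 where "p4 \<noteq> p2" "nbhd V H p3 = {p2, p4}"
      by (rule nbhd_cases_max_degree_2[OF sg deg])
    then show ?thesis
    proof cases
      case P3
      have "{p1, p3} \<subseteq> V" "card {p1, p3} = 2"
        using long nbhd_subset[of V H p2] by auto
      then show ?thesis
        using even_meeting_ends_of_P3[OF sg p1 P3 long(1)[symmetric]] that(3) by blast
    next
      case (longer p4)
      show ?thesis
        by (rule pendant_path4_cases[OF sg deg p1 long(2) longer(2) long(1) longer(1)])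
          (use that in blast)+
    qed
  qed
qed

definition add_edge :: "('a \<Rightarrow> 'a \<Rightarrow> bool) \<Rightarrow> 'a \<Rightarrow> 'a \<Rightarrow> 'a \<Rightarrow> 'a \<Rightarrow> bool" where
  "add_edge E a b u v \<longleftrightarrow> E u v \<or> (u = a \<and> v = b) \<or> (u = b \<and> v = a)"

lemma simple_graph_add_edge:
  "simple_graph V E \<Longrightarrow> a \<in> V \<Longrightarrow> b \<in> V \<Longrightarrow> a \<noteq> b \<Longrightarrow> simple_graph V (add_edge E a b)"
  by (auto simp: simple_graph_def add_edge_def)

lemma num_edges_add_edge:
  assumes sg: "simple_graph V E" and ab: "a \<in> V" "b \<in> V" "\<not> E a b"
  shows "num_edges V (add_edge E a b) = Suc (num_edges V E)"
proof -
  let ?edges = "\<lambda>E. {{u, v} | u v. u \<in> V \<and> v \<in> V \<and> E u v}"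
  have "?edges (add_edge E a b) = insert {a, b} (?edges E)"
    using ab by (auto simp: add_edge_def insert_commute)
  moreover have "{a, b} \<notin> ?edges E"
    using sg ab by (auto simp: simple_graph_def doubleton_eq_iff)
  moreover have "finite (?edges E)"
    using sg by (auto simp: simple_graph_def intro: finite_subset[of _ "Pow V"])
  ultimately show ?thesis
    by (simp add: num_edges_def)
qed

lemma closed_nbhd_null_add_edge:
  assumes sg: "simple_graph V E" and ab: "a \<in> V" "b \<in> V" "a \<noteq> b" "\<not> E a b"
  shows "closed_nbhd_null V (add_edge E a b) l x \<longleftrightarrow>
    (\<forall>w\<in>V - {a, b}. int l dvd (\<Sum>v\<in>closed_nbhd V E w. x v)) \<and>
    int l dvd (\<Sum>v\<in>closed_nbhd V E a. x v) + x b \<and> int l dvd (\<Sum>v\<in>closed_nbhd V E b. x v) + x a"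
proof -
  let ?\<sigma> = "\<lambda>w. \<Sum>v\<in>closed_nbhd V E w. x v"
  have fin_nbhd: "finite (closed_nbhd V E w)" for w
    using sg by (simp add: closed_nbhd_def simple_graph_def)
  have "closed_nbhd V (add_edge E a b) w = closed_nbhd V E w" if "w \<noteq> a" "w \<noteq> b" for w
    using that by (auto simp: closed_nbhd_def add_edge_def)
  moreover have "closed_nbhd V (add_edge E a b) a = insert b (closed_nbhd V E a)" "b \<notin> closed_nbhd V E a"
    using ab by (auto simp: closed_nbhd_def add_edge_def)
  moreover have "closed_nbhd V (add_edge E a b) b = insert a (closed_nbhd V E b)" "a \<notin> closed_nbhd V E b"
    using sg ab by (auto simp: simple_graph_def closed_nbhd_def add_edge_def)
  ultimately have sum_eq: "(\<Sum>v\<in>closed_nbhd V (add_edge E a b) w. x v)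
      = (if w = a then ?\<sigma> a + x b else if w = b then ?\<sigma> b + x a else ?\<sigma> w)" for w
    using fin_nbhd ab(3) by (simp add: add.commute)
  show ?thesis
    unfolding closed_nbhd_null_def sum_eq
  proof (intro iffI conjI ballI)
    assume null: "\<forall>w\<in>V. int l dvd (if w = a then ?\<sigma> a + x b else if w = b then ?\<sigma> b + x a else ?\<sigma> w)"
    show "int l dvd ?\<sigma> w" if "w \<in> V - {a, b}" for w
      using null that by auto
    show "int l dvd ?\<sigma> a + x b"
      using null ab by auto
    show "int l dvd ?\<sigma> b + x a"
      using null ab by auto
  next
    fix w assume "w \<in> V"
      and "(\<forall>w\<in>V - {a, b}. int l dvd ?\<sigma> w) \<and> int l dvd ?\<sigma> a + x b \<and> int l dvd ?\<sigma> b + x a"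
    then show "int l dvd (if w = a then ?\<sigma> a + x b else if w = b then ?\<sigma> b + x a else ?\<sigma> w)"
      by simp
  qed
qed

lemma pendant_path5_compl_in_V:
  assumes "pendant_path5 V (compl_graph V E) p1 p2 p3 p4 p5"
  shows "p1 \<in> V" "p2 \<in> V" "p3 \<in> V" "p4 \<in> V" "p5 \<in> V" "\<not> E p4 p5"
proof -
  let ?N = "nbhd V (compl_graph V E)"
  have "p2 \<in> ?N p1" "p1 \<in> ?N p2" "p3 \<in> ?N p2" "p4 \<in> ?N p3" "p5 \<in> ?N p4"
    using assms by (simp_all add: pendant_path5_def)
  then show "p1 \<in> V" "p2 \<in> V" "p3 \<in> V" "p4 \<in> V" "p5 \<in> V" "\<not> E p4 p5"
    by (simp_all add: nbhd_def compl_graph_def)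
qed

context
  fixes V :: "'a set" and E :: "'a \<Rightarrow> 'a \<Rightarrow> bool" and l :: nat and x :: "'a \<Rightarrow> int"
    and p1 p2 p3 p4 p5 :: 'a
  assumes sg: "simple_graph V E"
    and path: "pendant_path5 V (compl_graph V E) p1 p2 p3 p4 p5"
    and null: "closed_nbhd_null V (add_edge E p4 p5) l x"
begin

lemma pendant_path5_null_sums:
  "\<forall>w\<in>V - {p4, p5}. int l dvd (\<Sum>v\<in>closed_nbhd V E w. x v)"
  "int l dvd (\<Sum>v\<in>closed_nbhd V E p4. x v) + x p5"
  "int l dvd (\<Sum>v\<in>closed_nbhd V E p5. x v) + x p4"
  using null closed_nbhd_null_add_edge[OF sg pendant_path5_compl_in_V(4,5)[OF path]]
    pendant_path5_compl_in_V(6)[OF path] pendant_path5_distinct[OF path] by auto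

lemma pendant_path5_null_congruences:
  "int l dvd x p4" "int l dvd x p1" "int l dvd x p3 - x p2"
proof -
  let ?\<sigma> = "\<lambda>w. \<Sum>v\<in>closed_nbhd V E w. x v"
  let ?S = "\<Sum>v\<in>V. x v"
  note in_V = pendant_path5_compl_in_V[OF path] and dist = pendant_path5_distinct[OF path]
  have "?\<sigma> p1 = ?S - x p2" "?\<sigma> p2 = ?S - (x p1 + x p3)" "?\<sigma> p3 = ?S - (x p2 + x p4)"
    "?\<sigma> p4 = ?S - (x p3 + x p5)"
    using path dist in_V by (simp_all add: sum_closed_nbhd_eq_Diff_compl[OF sg] pendant_path5_def)
  then have "x p4 = ?\<sigma> p1 - ?\<sigma> p3" "x p1 = (?\<sigma> p4 + x p5) - ?\<sigma> p2"
    "x p3 - x p2 = ?\<sigma> p1 - (?\<sigma> p4 + x p5)"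
    by simp_all
  moreover have "int l dvd ?\<sigma> p1" "int l dvd ?\<sigma> p2" "int l dvd ?\<sigma> p3"
    using pendant_path5_null_sums(1) in_V dist by auto
  ultimately show "int l dvd x p4" "int l dvd x p1" "int l dvd x p3 - x p2"
    using pendant_path5_null_sums(2) by (simp_all add: dvd_diff)
qed

text \<open>Moving x p5 from p3 to p1 undoes the effect of the added edge.\<close>
lemma pendant_path5_null_shift:
  "closed_nbhd_null V E l (\<lambda>v. x v + (if v = p1 then x p5 else 0) - (if v = p3 then x p5 else 0))"
  unfolding closed_nbhd_null_def
proof
  fix w assume w: "w \<in> V"
  let ?\<sigma> = "\<lambda>w. \<Sum>v\<in>closed_nbhd V E w. x v"
  let ?N = "nbhd V (compl_graph V E)"
  note in_V = pendant_path5_compl_in_V[OF path] and dist = pendant_path5_distinct[OF path]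
  have N: "?N p1 = {p2}" "?N p3 = {p2, p4}"
    using path by (simp_all add: pendant_path5_def)
  have "p1 \<in> closed_nbhd V E w \<longleftrightarrow> w \<notin> ?N p1" "p3 \<in> closed_nbhd V E w \<longleftrightarrow> w \<notin> ?N p3"
    using closed_nbhd_eq_Diff_compl[OF sg w] nbhd_sym[OF simple_graph_compl_graph[OF sg]] in_V
    by auto
  then have mem: "p1 \<in> closed_nbhd V E w \<longleftrightarrow> w \<noteq> p2" "p3 \<in> closed_nbhd V E w \<longleftrightarrow> w \<noteq> p2 \<and> w \<noteq> p4"
    using N by simp_all
  have "finite (closed_nbhd V E w)"
    using sg by (simp add: simple_graph_def closed_nbhd_def)
  then have "(\<Sum>v\<in>closed_nbhd V E w. x v + (if v = p1 then x p5 else 0) - (if v = p3 then x p5 else 0))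
      = ?\<sigma> w + (if w \<noteq> p2 then x p5 else 0) - (if w \<noteq> p2 \<and> w \<noteq> p4 then x p5 else 0)"
    by (simp add: sum.distrib sum_subtractf mem)
  also have "int l dvd \<dots>"
  proof -
    consider "w = p2" | "w = p4" | "w = p5" | "w \<in> V - {p4, p5}" "w \<noteq> p2"
      using w by blast
    then show ?thesis
    proof cases
      case 3
      have "int l dvd ?\<sigma> p5"
        using dvd_diff[OF pendant_path5_null_sums(3) pendant_path5_null_congruences(1)] by simp
      then show ?thesis
        using 3 dist by auto
    qed (use pendant_path5_null_sums dist w in auto)
  qed
  finally show "int l dvd (\<Sum>v\<in>closed_nbhd V E w. x v + (if v = p1 then x p5 else 0) - (if v = p3 then x p5 else 0))" .
qed

end

lemma N_AW_add_edge_at_pendant_path5: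
  assumes sg: "simple_graph V E" and l: "0 < l"
    and path: "pendant_path5 V (compl_graph V E) p1 p2 p3 p4 p5" and naw: "N_AW V E l"
  shows "N_AW V (add_edge E p4 p5) l"
proof -
  note in_V = pendant_path5_compl_in_V[OF path] and dist = pendant_path5_distinct[OF path]
  have fin: "finite V"
    using sg by (simp add: simple_graph_def)
  show ?thesis
  proof (rule N_AW_if_null_trivial[OF fin l], intro ballI)
    fix x u assume null: "closed_nbhd_null V (add_edge E p4 p5) l x" and u: "u \<in> V"
    define y where "y v = x v + (if v = p1 then x p5 else 0) - (if v = p3 then x p5 else 0)" for v
    have y: "int l dvd y v" if "v \<in> V" for v
      using null_trivial_if_N_AW[OF sg naw pendant_path5_null_shift[OF sg path null] that]
      by (simp add: y_def)
    note cong = pendant_path5_null_congruences[OF sg path null]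
    consider "u = p1" | "u = p3" | "u \<noteq> p1" "u \<noteq> p3"
      by blast
    then show "int l dvd x u"
    proof cases
      case 1
      then show ?thesis
        using cong(2) by simp
    next
      case 2
      have "int l dvd x p2"
        using y[OF in_V(2)] dist by (auto simp: y_def)
      with cong(3) have "int l dvd (x p3 - x p2) + x p2"
        by (rule dvd_add)
      then show ?thesis
        using 2 by simp
    next
      case 3
      then show ?thesis
        using y[OF u] by (simp add: y_def)
    qed
  qed
qed

lemma N_AW_iso:
  fixes h :: "'b \<Rightarrow> 'a"
  assumes h: "bij_betw h W V" and adj: "\<And>i j. i \<in> W \<Longrightarrow> j \<in> W \<Longrightarrow> E' i j \<longleftrightarrow> E (h i) (h j)"
    and naw: "N_AW V E l"
  shows "N_AW W E' l"
  unfolding N_AW_def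
proof
  fix f :: "'b \<Rightarrow> int"
  obtain t :: "'a \<Rightarrow> nat"
    where t: "\<forall>u\<in>V. (f (inv_into W h u) + (\<Sum>v\<in>{v \<in> V. v = u \<or> E u v}. int (t v))) mod int l = 0"
    using spec[OF naw[unfolded N_AW_def], of "\<lambda>u. f (inv_into W h u)"] by blast
  show "\<exists>t'. \<forall>i\<in>W. (f i + (\<Sum>j\<in>{j \<in> W. j = i \<or> E' i j}. int (t' j))) mod int l = 0"
  proof (intro exI ballI)
    fix i assume i: "i \<in> W"
    have inj: "inj_on h W" and surj: "h ` W = V"
      using h by (simp_all add: bij_betw_def)
    have "h ` {j \<in> W. j = i \<or> E' i j} = {v \<in> V. v = h i \<or> E (h i) v}"
      using i adj inj surj by (auto simp: inj_on_eq_iff)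
    then have "(\<Sum>j\<in>{j \<in> W. j = i \<or> E' i j}. int (t (h j))) = (\<Sum>v\<in>{v \<in> V. v = h i \<or> E (h i) v}. int (t v))"
      using sum.reindex[OF inj_on_subset[OF inj], of "{j \<in> W. j = i \<or> E' i j}" "\<lambda>v. int (t v)"]
      by auto
    moreover have "inv_into W h (h i) = i" "h i \<in> V"
      using h i by (auto simp: bij_betw_inv_into_left bij_betwE)
    ultimately show "(f i + (\<Sum>j\<in>{j \<in> W. j = i \<or> E' i j}. int ((t \<circ> h) j))) mod int l = 0"
      using t by auto
  qed
qed

lemma num_edges_iso:
  assumes h: "bij_betw h W V" and adj: "\<And>i j. i \<in> W \<Longrightarrow> j \<in> W \<Longrightarrow> E' i j \<longleftrightarrow> E (h i) (h j)"
  shows "num_edges W E' = num_edges V E"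
proof -
  let ?edges = "\<lambda>V E. {{u, v} | u v. u \<in> V \<and> v \<in> V \<and> E u v}"
  have inj: "inj_on h W" and surj: "h ` W = V"
    using h by (simp_all add: bij_betw_def)
  have "?edges V E = image h ` ?edges W E'"
  proof
    show "?edges V E \<subseteq> image h ` ?edges W E'"
    proof
      fix e assume "e \<in> ?edges V E"
      then obtain i j where "e = {h i, h j}" "i \<in> W" "j \<in> W" "E (h i) (h j)"
        using surj by blast
      then show "e \<in> image h ` ?edges W E'"
        using adj by (intro image_eqI[of _ _ "{i, j}"]) auto
    qed
    show "image h ` ?edges W E' \<subseteq> ?edges V E"
      using adj surj by auto
  qed
  moreover have "inj_on (image h) (?edges W E')"
    by (rule inj_on_subset[OF inj_on_image_Pow[OF inj]]) auto
  ultimately show ?thesis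
    by (simp add: num_edges_def card_image)
qed

lemma num_edges_le: "finite V \<Longrightarrow> num_edges V E \<le> 2 ^ card V"
  unfolding num_edges_def card_Pow[symmetric] by (rule card_mono) auto

lemma num_edges_le_max_NAW:
  assumes sg: "simple_graph V E" and n: "card V = n" and naw: "N_AW V E l"
  shows "num_edges V E \<le> max_NAW n l"
proof -
  obtain h where h: "bij_betw h {0..<n} V"
    using ex_bij_betw_nat_finite[of V] sg n by (auto simp: simple_graph_def)
  define E' where "E' i j \<longleftrightarrow> i \<in> {0..<n} \<and> j \<in> {0..<n} \<and> E (h i) (h j)" for i j
  have adj: "\<And>i j. i \<in> {0..<n} \<Longrightarrow> j \<in> {0..<n} \<Longrightarrow> E' i j \<longleftrightarrow> E (h i) (h j)"
    by (simp add: E'_def)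
  have "simple_graph {0..<n} E'"
    using sg by (auto simp: simple_graph_def E'_def)
  moreover have "N_AW {0..<n} E' l"
    by (rule N_AW_iso[of h _ _ E' E, OF h adj naw])
  moreover have "finite {num_edges {0..<n} E | E. simple_graph {0..<n} E \<and> N_AW {0..<n} E l}"
    by (rule finite_subset[of _ "{..2 ^ n}"]) (use num_edges_le[of "{0..<n}"] in auto)
  ultimately have "num_edges {0..<n} E' \<le> max_NAW n l"
    unfolding max_NAW_def by (blast intro: Max_ge)
  then show ?thesis
    using num_edges_iso[of h _ _ E' E, OF h adj] by simp
qed

lemma extremal_no_pendant_path5:
  assumes ext: "extremal n l V E" and l: "0 < l"
  shows "\<not> pendant_path5 V (compl_graph V E) p1 p2 p3 p4 p5"
proof
  assume path: "pendant_path5 V (compl_graph V E) p1 p2 p3 p4 p5"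
  have sg: "simple_graph V E" and n: "card V = n" and naw: "N_AW V E l"
    and max: "num_edges V E = max_NAW n l"
    using ext by (simp_all add: extremal_def)
  note in_V = pendant_path5_compl_in_V[OF path]
  have "p4 \<noteq> p5"
    using path by (simp add: pendant_path5_def)
  then have "simple_graph V (add_edge E p4 p5)"
    using simple_graph_add_edge[OF sg in_V(4,5)] by simp
  then have "num_edges V (add_edge E p4 p5) \<le> max_NAW n l"
    using num_edges_le_max_NAW n N_AW_add_edge_at_pendant_path5[OF sg l path naw] by blast
  then show False
    using num_edges_add_edge[OF sg in_V(4,5,6)] max by simp
qed
lemma component_subset_component_class:
  assumes sg: "simple_graph V H" and v: "v \<in> {u \<in> V. P (component V H u)}"
  shows "component V H v \<subseteq> {u \<in> V. P (component V H u)}"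
proof
  fix x assume x: "x \<in> component V H v"
  then have "component V H x = component V H v"
    by (rule component_eq[OF sg])
  then show "x \<in> {u \<in> V. P (component V H u)}"
    using v x component_subset[of V H v] by auto
qed

lemma extremal_compl_degree_even:
  assumes ext: "extremal n l V E" and l: "even l" "0 < l"
    and deg: "\<forall>v\<in>V. degree V (compl_graph V E) v \<le> 2" and u: "u \<in> V"
    and not_P2_P4: "\<not> (iso_path (compl_graph V E) (component V (compl_graph V E) u) 2 \<or>
                       iso_path (compl_graph V E) (component V (compl_graph V E) u) 4)"
  shows "even (degree V (compl_graph V E) u)"
proof -
  let ?H = "compl_graph V E"
  have sg: "simple_graph V E" and naw: "N_AW V E l"
    using ext by (simp_all add: extremal_def)
  have "card (nbhd V ?H u) \<noteq> 1"
  proof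
    assume "card (nbhd V ?H u) = 1"
    then obtain p2 where p2: "nbhd V ?H u = {p2}"
      by (rule card_1_singletonE)
    show False
    proof (rule pendant_vertex_component_cases[OF simple_graph_compl_graph[OF sg] deg p2])
      fix T assume T: "T \<subseteq> V" "card T = 2" "even_meeting V ?H T"
      then have "\<not> N_AW V E l"
        using not_N_AW_if_even_meeting_compl[OF sg l T(1)] by fastforce
      then show False
        using naw by blast
    next
      fix p3 p4 p5 assume "pendant_path5 V ?H u p2 p3 p4 p5"
      then show False
        using extremal_no_pendant_path5[OF ext l(2)] by blast
    qed (use not_P2_P4 in blast)+
  qed
  moreover have "card (nbhd V ?H u) \<le> 2"
    using u deg by (simp add: degree_eq_card_nbhd)
  ultimately show ?thesis
    unfolding degree_eq_card_nbhd by (auto simp: numeral_2_eq_2 le_Suc_eq)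
qed

lemma even_card_P2_P4_components:
  assumes sg: "simple_graph V H"
  shows "even (card {v \<in> V. iso_path H (component V H v) 2 \<or> iso_path H (component V H v) 4})"
proof (rule even_card_if_components_even[OF sg Collect_subset]; intro ballI)
  fix v assume v: "v \<in> {v \<in> V. iso_path H (component V H v) 2 \<or> iso_path H (component V H v) 4}"
  show "component V H v \<subseteq> {v \<in> V. iso_path H (component V H v) 2 \<or> iso_path H (component V H v) 4}"
    by (rule component_subset_component_class[OF sg v])
  show "even (card (component V H v))"
    using v iso_path_card[of H "component V H v"] by auto
qed

lemma extremal_even_meeting_non_P2_P4_components:
  assumes ext: "extremal n l V E" and l: "even l" "0 < l"
    and deg: "\<forall>v\<in>V. degree V (compl_graph V E) v \<le> 2"
  defines "H \<equiv> compl_graph V E"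
  shows "even_meeting V H {v \<in> V. \<not> (iso_path H (component V H v) 2 \<or> iso_path H (component V H v) 4)}"
    (is "even_meeting V H ?U")
proof -
  have sgH: "simple_graph V H"
    using ext by (simp add: extremal_def H_def simple_graph_compl_graph)
  show ?thesis
  proof (rule even_meeting_if_closed_even_degree[OF sgH]; intro ballI)
    fix u assume u: "u \<in> ?U"
    then have "nbhd V H u \<subseteq> component V H u"
      by (simp add: nbhd_subset_component self_in_component)
    also have "\<dots> \<subseteq> ?U"
      by (rule component_subset_component_class[OF sgH u])
    finally show "nbhd V H u \<subseteq> ?U" .
    show "even (degree V H u)"
      using u extremal_compl_degree_even[OF ext l deg] by (simp add: H_def)
  qed
qed

theorem theorem4p9:
  fixes V :: "'a set" and E :: "'a \<Rightarrow> 'a \<Rightarrow> bool" and n l :: nat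
  assumes "l \<ge> 2" and "even l" and "even n"
    and "extremal n l V E"
    and "\<forall>v \<in> V. degree V (compl_graph V E) v \<le> 2"
  shows "\<forall>v \<in> V. iso_path (compl_graph V E) (component V (compl_graph V E) v) 2 \<or>
                  iso_path (compl_graph V E) (component V (compl_graph V E) v) 4"
proof -
  let ?H = "compl_graph V E"
  let ?P2_P4 = "\<lambda>C. iso_path ?H C 2 \<or> iso_path ?H C 4"
  define U where "U = {v \<in> V. \<not> ?P2_P4 (component V ?H v)}"
  have sg: "simple_graph V E" and n: "card V = n" and naw: "N_AW V E l" and l: "0 < l"
    using assms(1,4) by (simp_all add: extremal_def)
  have meet: "even_meeting V ?H U"
    unfolding U_def using extremal_even_meeting_non_P2_P4_components[OF assms(4,2) l assms(5)] .
  have "V - U = {v \<in> V. ?P2_P4 (component V ?H v)}"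
    by (auto simp: U_def)
  then have "even (card (V - U))"
    using even_card_P2_P4_components[OF simple_graph_compl_graph[OF sg]] by simp
  then have "even (card U)"
    using card_Int_Diff[of V U] sg n assms(3) by (simp add: U_def simple_graph_def Int_absorb1)
  with meet have "U = {}"
    using not_N_AW_if_even_meeting_compl[OF sg assms(2) l, of U] naw by (auto simp: U_def)
  then show ?thesis
    by (auto simp: U_def)
qed

end
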